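(* Let $a\geq 3$ and $m\geq 2a^2-a+2$ be integers, and suppose $[C(m,a)]$ is colored with red and blue so that there is no monochromatic solution of $L(m,a)$ in $[C(m,a)]$, with $a-2$ red and $a-1$ blue. Then $m-2$ is red and $m-3$ is blue.
   Context: For integers $m\geq 3$, $a\geq 1$, $L(m,a)$ denotes the equation $x_1+x_2+\cdots+x_{m-1}=a x_m$. For a positive integer $n$, $[n]=\{1,\dots,n\}$. A solution of $L(m,a)$ in $[n]$ is an $m$-tuple $(x_1,\dots,x_m)\in[n]^m$ (entries not necessarily distinct) satisfying the equation; given a 2-coloring of $[n]$, it is monochromatic if all $x_i$ have the same color. $C(m,a)$ denotes $\left\lceil \frac{m-1}{a}\left\lceil \frac{m-1}{a}\right\rceil\right\rceil$. *)

theory Defs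
  imports Main Complex_Main
begin

definition Cma :: "nat \<Rightarrow> nat \<Rightarrow> nat" where
  "Cma m a = nat \<lceil>(real (m - 1) / real a) * real_of_int \<lceil>real (m - 1) / real a\<rceil>\<rceil>"

definition is_solution :: "nat \<Rightarrow> nat \<Rightarrow> nat \<Rightarrow> (nat \<Rightarrow> nat) \<Rightarrow> bool" where
  "is_solution m a n x \<longleftrightarrow>
     (\<forall>i<m. x i \<in> {1..n}) \<and> (\<Sum>i<m - 1. x i) = a * x (m - 1)"

text \<open>A 2-coloring is c :: nat \<Rightarrow> bool (True = red, False = blue), only its values on [n] matter.\<close>
definition monochromatic :: "nat \<Rightarrow> (nat \<Rightarrow> bool) \<Rightarrow> (nat \<Rightarrow> nat) \<Rightarrow> bool" where
  "monochromatic m c x \<longleftrightarrow> (\<forall>i<m. \<forall>j<m. c (x i) = c (x j))"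

definition no_mono_solution :: "nat \<Rightarrow> nat \<Rightarrow> nat \<Rightarrow> (nat \<Rightarrow> bool) \<Rightarrow> bool" where
  "no_mono_solution m a n c \<longleftrightarrow>
     \<not> (\<exists>x. is_solution m a n x \<and> monochromatic m c x)"

end

theory Submission
  imports Defs
begin

(* For j < a and n \<ge> 1 consider the (j+n+1)-tuple
     (n, ..., n, a-j, ..., a-j, n)   with j leading entries n and n entries a-j.
   Its first j+n entries sum to j*n + n*(a-j) = a*n, so it solves L(j+n+1, a),
   and it uses only the two values n and a-j.  Hence in a colouring without a
   monochromatic solution the numbers n and a-j must get different colours.
   Since m - 1 \<ge> a^2 forces C(m,a) \<ge> m - 1, all entries lie in [C(m,a)].
   Taking j = 1, n = m-2 shows that m-2 is coloured differently from the blue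
   number a-1, and taking j = 2, n = m-3 that m-3 is coloured differently from
   the red number a-2. *)

text \<open>Once \<open>a\<^sup>2 \<le> m - 1\<close>, the interval \<open>[C(m,a)]\<close> contains \<open>[m - 1]\<close>:
  with \<open>r = (m-1)/a \<ge> a\<close> we have \<open>r \<lceil>r\<rceil> \<ge> r\<^sup>2 \<ge> m - 1\<close>.\<close>
lemma Cma_ge:
  fixes m a :: nat
  assumes "a \<ge> 1" and "a^2 \<le> m - 1"
  shows "m - 1 \<le> Cma m a"
proof -
  define r where "r = real (m - 1) / real a"
  have r_nonneg: "r \<ge> 0" unfolding r_def by simp
  have "real a * real a \<le> real (m - 1)"
    using assms(2) by (metis of_nat_le_iff of_nat_mult power2_eq_square)
  hence "real (m - 1) * (real a * real a) \<le> real (m - 1) * real (m - 1)"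
    by (intro mult_left_mono) auto
  hence "real (m - 1) \<le> r * r"
    using assms(1) by (simp add: r_def pos_le_divide_eq)
  also have "r * r \<le> r * real_of_int \<lceil>r\<rceil>"
    using r_nonneg by (intro mult_left_mono) auto
  finally have "int (m - 1) \<le> \<lceil>r * real_of_int \<lceil>r\<rceil>\<rceil>"
    by (metis ceiling_mono ceiling_of_nat)
  thus ?thesis unfolding Cma_def r_def[symmetric] by linarith
qed

definition block_tuple :: "nat \<Rightarrow> nat \<Rightarrow> nat \<Rightarrow> nat \<Rightarrow> nat" where
  "block_tuple j n q i = (if i < j \<or> i = j + n then n else q)"

lemma block_tuple_sum: "(\<Sum>i<j + n. block_tuple j n q i) = j * n + n * q"
proof -
  have "(\<Sum>i<j + n. block_tuple j n q i)
        = (\<Sum>i=0..<j. block_tuple j n q i) + (\<Sum>i=j..<j + n. block_tuple j n q i)"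
    by (simp add: lessThan_atLeast0 sum.atLeastLessThan_concat)
  also have "(\<Sum>i=0..<j. block_tuple j n q i) = (\<Sum>i=0..<j. n)"
    by (rule sum.cong) (auto simp: block_tuple_def)
  also have "(\<Sum>i=j..<j + n. block_tuple j n q i) = (\<Sum>i=j..<j + n. q)"
    by (rule sum.cong) (auto simp: block_tuple_def)
  finally show ?thesis by simp
qed

lemma block_tuple_solution:
  fixes j n a N :: nat
  assumes "j < a" and "1 \<le> n" and "n \<le> N" and "a \<le> N"
  shows "is_solution (j + n + 1) a N (block_tuple j n (a - j))"
proof -
  have "(\<Sum>i<j + n. block_tuple j n (a - j) i) = j * n + n * (a - j)"
    by (rule block_tuple_sum)
  also have "\<dots> = a * block_tuple j n (a - j) (j + n)"
    using assms(1) by (simp add: block_tuple_def algebra_simps diff_mult_distrib2)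
  finally show ?thesis
    using assms unfolding is_solution_def by (auto simp: block_tuple_def)
qed

lemma colours_differ:
  fixes j n a N :: nat and c :: "nat \<Rightarrow> bool"
  assumes "no_mono_solution (j + n + 1) a N c"
    and "j < a" and "1 \<le> n" and "n \<le> N" and "a \<le> N"
  shows "c n \<noteq> c (a - j)"
proof
  assume same: "c n = c (a - j)"
  have "monochromatic (j + n + 1) c (block_tuple j n (a - j))"
    using same unfolding monochromatic_def block_tuple_def by auto
  with block_tuple_solution[OF assms(2-5)] assms(1) show False
    unfolding no_mono_solution_def by blast
qed

theorem lemma2:
  fixes m a :: nat and red :: "nat \<Rightarrow> bool"
  assumes "a \<ge> 3"
    and "m \<ge> 2 * a^2 - a + 2"
    and "no_mono_solution m a (Cma m a) red"
    and "red (a - 2)"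
    and "\<not> red (a - 1)"
  shows "red (m - 2) \<and> \<not> red (m - 3)"
proof -
  have "a \<le> a^2" "9 \<le> a^2"
    using assms(1) mult_le_mono[OF assms(1) assms(1)] by (auto simp: power2_eq_square)
  hence big: "a^2 \<le> m - 1" "a \<le> m - 1" "4 \<le> m" using assms(2) by linarith+
  have C: "m - 1 \<le> Cma m a" using Cma_ge assms(1) big(1) by simp
  have len: "1 + (m - 2) + 1 = m" "2 + (m - 3) + 1 = m" using big(3) by simp_all
  have "no_mono_solution (1 + (m - 2) + 1) a (Cma m a) red"
    using assms(3) len(1) by simp
  hence "red (m - 2) \<noteq> red (a - 1)"
    by (rule colours_differ) (use assms(1) big C in auto)
  moreover have "no_mono_solution (2 + (m - 3) + 1) a (Cma m a) red"
    using assms(3) len(2) by simp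
  hence "red (m - 3) \<noteq> red (a - 2)"
    by (rule colours_differ) (use assms(1) big C in auto)
  ultimately show ?thesis using assms(4,5) by blast
qed

end
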